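(* Let $\mathbb P$ be a probability measure on $\Omega_+$ under which $(\omega(x))_{x\ge0}$ is stationary. Then $E_0[D^x_\infty]\le1$ for all $x\ge0$.
   Context: Cookie environments: $\Omega_+=([1/2,1]^{\mathbb N})^{\mathbb Z}$, $\omega(x)=(\omega(x,i))_{i\ge1}$. $P_{x,\omega}$ is the law of the nearest-neighbor process $(X_n)_{n\ge0}$ with $X_0=x$ which, on its $i$-th visit to site $z$, jumps to $z+1$ with probability $\omega(z,i)$ and to $z-1$ otherwise. Annealed measure $P_x[\cdot]=\mathbb E[P_{x,\omega}[\cdot]]$, with expectation $E_x$. $D_n^x=\sum_{i=1}^{\#\{m<n:X_m=x\}}(2\omega(x,i)-1)$ and $D_\infty^x=\lim_{n\to\infty}D_n^x$ (total drift of the cookies at $x$ eaten by the walk). *)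

theory Defs
  imports "HOL-Probability.Probability"
begin

text \<open>Cookie environments. A cookie environment is a map
  omega :: int => nat => real; the value omega z i is the strength of the
  (i+1)-th cookie at site z (cookie indices are shifted to start at 0).\<close>

type_synonym env = "int \<Rightarrow> nat \<Rightarrow> real"

definition Omega_plus :: "env measure" where
  "Omega_plus = PiM UNIV (\<lambda>_::int. PiM UNIV (\<lambda>_::nat. restrict_space borel {1/2..1::real}))"

definition env_shift_restr :: "nat \<Rightarrow> env \<Rightarrow> (int \<Rightarrow> nat \<Rightarrow> real)" where
  "env_shift_restr k \<omega> = (\<lambda>x\<in>{0::int..}. \<omega> (x + int k))"

definition Omega_plus_nonneg :: "(int \<Rightarrow> nat \<Rightarrow> real) measure" where
  "Omega_plus_nonneg = PiM {0::int..} (\<lambda>_. PiM UNIV (\<lambda>_::nat. restrict_space borel {1/2..1::real}))"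

definition stationary_nonneg :: "env measure \<Rightarrow> bool" where
  "stationary_nonneg P \<longleftrightarrow>
     (\<forall>k. distr P Omega_plus_nonneg (env_shift_restr k) = distr P Omega_plus_nonneg (env_shift_restr 0))"

text \<open>Construction of the cookie walk from i.i.d. uniform [0,1] variables u n:
  hist omega x u n is the list [X_0, ..., X_n]. At step n the walk is at y = X_n, which
  is its j-th visit to y, j = #{m <= n. X_m = y}; it uses cookie j (index j-1 here)
  and jumps to y+1 iff u n < omega y (j-1), i.e. with probability omega(y,j).\<close>
primrec hist :: "env \<Rightarrow> int \<Rightarrow> (nat \<Rightarrow> real) \<Rightarrow> nat \<Rightarrow> int list" where
  "hist \<omega> x u 0 = [x]"
| "hist \<omega> x u (Suc n) =
     (let h = hist \<omega> x u n; y = last h; j = count_list h y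
      in h @ [if u n < \<omega> y (j - 1) then y + 1 else y - 1])"

definition walk :: "env \<Rightarrow> int \<Rightarrow> (nat \<Rightarrow> real) \<Rightarrow> nat \<Rightarrow> int" where
  "walk \<omega> x u n = last (hist \<omega> x u n)"

definition unif_seq :: "(nat \<Rightarrow> real) measure" where
  "unif_seq = PiM UNIV (\<lambda>_::nat. uniform_measure lborel {0..1::real})"

definition drift_n :: "env \<Rightarrow> (nat \<Rightarrow> int) \<Rightarrow> int \<Rightarrow> nat \<Rightarrow> real" where
  "drift_n \<omega> X z n = (\<Sum>i < card {m. m < n \<and> X m = z}. 2 * \<omega> z i - 1)"

text \<open>D_infty^z = lim_n D_n^z; on Omega_+ the sequence is nondecreasing and nonnegative,
  so the limit is its supremum in [0,infinity].\<close>
definition drift_inf :: "env \<Rightarrow> (nat \<Rightarrow> int) \<Rightarrow> int \<Rightarrow> ennreal" where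
  "drift_inf \<omega> X z = (SUP n. ennreal (drift_n \<omega> X z n))"

definition quenched_E_drift :: "env \<Rightarrow> int \<Rightarrow> int \<Rightarrow> ennreal" where
  "quenched_E_drift \<omega> x z = (\<integral>\<^sup>+ u. drift_inf \<omega> (walk \<omega> x u) z \<partial>unif_seq)"

definition annealed_E_drift :: "env measure \<Rightarrow> int \<Rightarrow> int \<Rightarrow> ennreal" where
  "annealed_E_drift P x z = (\<integral>\<^sup>+ \<omega>. quenched_E_drift \<omega> x z \<partial>P)"

end

theory Submission
  imports Defs
begin

text \<open>Let the walk be stopped at a far site N. Replacing all cookies at negative sites by cookies
  of strength 1 can only increase the drift the walk from 0 eats at x, and the result depends on
  the environment on the nonnegative sites only. Conversely, a walk with nonnegative drift started
  at -k returns to 0 almost surely, so from -k it eats at least as much. For the environment shifted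
  by k this bounds the modified drift at x by the drift eaten at x + k from 0; summed over k < M
  these are at most the total drift eaten before hitting N + M, hence at most N + M, the expected
  displacement. By stationarity all M shifts have the same expectation, which is therefore at most
  (N + M) / M, and M tends to infinity.\<close>

lemma convex_combination_mono:
  fixes p a b :: real
  assumes "0 \<le> p" "p \<le> 1" "a \<le> a'" "b \<le> b'"
  shows "p * a + (1 - p) * b \<le> p * a' + (1 - p) * b'"
  using assms by (intro add_mono mult_left_mono) auto

lemma ennreal_convex_combination:
  fixes p a b :: real
  assumes "0 \<le> p" "p \<le> 1" "0 \<le> a" "0 \<le> b"
  shows "ennreal (p * a + (1 - p) * b) = ennreal p * ennreal a + ennreal (1 - p) * ennreal b"
  using assms by (simp add: ennreal_plus ennreal_mult)

lemma SUP_Suc_eq: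
  fixes f :: "nat \<Rightarrow> 'a::complete_lattice"
  assumes "incseq f"
  shows "(SUP n. f (Suc n)) = (SUP n. f n)"
proof (rule antisym)
  show "(SUP n. f (Suc n)) \<le> (SUP n. f n)"
    by (intro SUP_mono) blast
  show "(SUP n. f n) \<le> (SUP n. f (Suc n))"
    using assms by (intro SUP_mono) (auto simp: incseq_Suc_iff)
qed

lemma ennreal_le_1_of_linear_bound:
  fixes I :: ennreal and C :: real
  assumes "0 \<le> C" and bound: "\<And>M::nat. 0 < M \<Longrightarrow> of_nat M * I \<le> ennreal (C + real M)"
  shows "I \<le> 1"
proof -
  have "I \<le> ennreal (C + 1)"
    using bound[of 1] by simp
  then obtain r where r: "I = ennreal r" "0 \<le> r"
    by (cases I rule: ennreal_cases) (auto simp: top_unique)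
  have "r \<le> 1 + C * inverse (real (Suc n))" for n
  proof -
    have "ennreal (real (Suc n) * r) \<le> ennreal (C + real (Suc n))"
      using bound[of "Suc n"] r by (simp add: ennreal_mult ennreal_of_nat_eq_real_of_nat)
    then have "real (Suc n) * r \<le> C + real (Suc n)"
      using assms(1) by (subst (asm) ennreal_le_iff) simp_all
    then show ?thesis
      by (simp add: field_simps)
  qed
  moreover have "(\<lambda>n. 1 + C * inverse (real (Suc n))) \<longlonglongrightarrow> 1"
    using tendsto_add[OF tendsto_const tendsto_mult[OF tendsto_const LIMSEQ_inverse_real_of_nat], of 1 C]
    by simp
  ultimately have "r \<le> 1"
    by (intro LIMSEQ_le_const[of "\<lambda>n. 1 + C * inverse (real (Suc n))"]) auto
  then show ?thesis
    using r by simp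
qed

section \<open>First-step decomposition of the walk\<close>

definition eat_cookie :: "int \<Rightarrow> env \<Rightarrow> env" where
  "eat_cookie y \<omega> = fun_upd \<omega> y (\<lambda>i. \<omega> y (Suc i))"

definition jump :: "env \<Rightarrow> int \<Rightarrow> real \<Rightarrow> int" where
  "jump \<omega> y a = (if a < \<omega> y 0 then y + 1 else y - 1)"

lemma hist_nonempty: "hist \<omega> y u n \<noteq> []"
  by (induction n) (auto simp: Let_def)

lemma hist_Suc_first:
  "hist \<omega> y u (Suc n) = y # hist (eat_cookie y \<omega>) (jump \<omega> y (u 0)) (u \<circ> Suc) n"
proof (induction n)
  case 0
  then show ?case by (simp add: jump_def)
next
  case (Suc n)
  define h where "h = hist (eat_cookie y \<omega>) (jump \<omega> y (u 0)) (u \<circ> Suc) n"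
  define z where "z = last h"
  have "h \<noteq> []" using hist_nonempty h_def by simp
  then have "count_list h z \<noteq> 0" and last_z: "last (y # h) = z"
    by (simp_all add: z_def count_list_0_iff)
  then have cookie: "eat_cookie y \<omega> z (count_list h z - 1) = \<omega> z (count_list (y # h) z - 1)"
    by (auto simp: eat_cookie_def)
  have "hist \<omega> y u (Suc (Suc n)) = (y # h) @
      [if u (Suc n) < \<omega> z (count_list (y # h) z - 1) then z + 1 else z - 1]"
    by (simp only: hist.simps(2)[of \<omega> y u "Suc n"] Suc h_def[symmetric] Let_def last_z)
  also have "\<dots> = y # (h @
      [if (u \<circ> Suc) n < eat_cookie y \<omega> z (count_list h z - 1) then z + 1 else z - 1])"
    by (simp only: cookie) simp
  also have "\<dots> = y # hist (eat_cookie y \<omega>) (jump \<omega> y (u 0)) (u \<circ> Suc) (Suc n)"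
    by (simp only: hist.simps(2)[of _ _ _ n] Let_def flip: h_def z_def)
  finally show ?case .
qed

lemma walk_Suc_first:
  "walk \<omega> y u = case_nat y (walk (eat_cookie y \<omega>) (jump \<omega> y (u 0)) (u \<circ> Suc))"
proof
  fix n
  show "walk \<omega> y u n = case_nat y (walk (eat_cookie y \<omega>) (jump \<omega> y (u 0)) (u \<circ> Suc)) n"
    by (cases n) (simp_all only: walk_def hist_Suc_first, simp_all add: walk_def hist_nonempty)
qed

definition drift_at :: "int \<Rightarrow> env \<Rightarrow> int \<Rightarrow> real" where
  "drift_at x \<omega> y = (if y = x then 2 * \<omega> y 0 - 1 else 0)"

lemma card_visits_Suc_first:
  "card {m. m < Suc n \<and> case_nat y X m = z} = (if y = z then 1 else 0) + card {m. m < n \<and> X m = z}"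
proof -
  have "{m. m < Suc n \<and> case_nat y X m = z} = (if y = z then {0} else {}) \<union> Suc ` {m. m < n \<and> X m = z}"
  proof (rule set_eqI)
    fix m
    show "m \<in> {m. m < Suc n \<and> case_nat y X m = z} \<longleftrightarrow>
        m \<in> (if y = z then {0} else {}) \<union> Suc ` {m. m < n \<and> X m = z}"
      by (cases m) auto
  qed
  moreover have "card (Suc ` {m. m < n \<and> X m = z}) = card {m. m < n \<and> X m = z}"
    by (rule card_image) simp
  ultimately show ?thesis by (auto simp: card_insert_if)
qed

lemma drift_n_Suc_first:
  "drift_n \<omega> (case_nat y X) z (Suc n) = drift_at z \<omega> y + drift_n (eat_cookie y \<omega>) X z n"
  by (cases "y = z")
    (simp_all add: drift_n_def card_visits_Suc_first sum.lessThan_Suc_shift drift_at_def eat_cookie_def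
      del: sum.lessThan_Suc)

definition cookie_env :: "env \<Rightarrow> bool" where
  "cookie_env \<omega> \<longleftrightarrow> (\<forall>z i. 1/2 \<le> \<omega> z i \<and> \<omega> z i \<le> 1)"

lemma cookie_env_eat_cookie: "cookie_env \<omega> \<Longrightarrow> cookie_env (eat_cookie y \<omega>)"
  by (auto simp: cookie_env_def eat_cookie_def)

lemma cookie_env_bounds:
  assumes "cookie_env \<omega>"
  shows "0 \<le> \<omega> y 0" "1/2 \<le> \<omega> y 0" "\<omega> y 0 \<le> 1"
  using assms by (auto simp: cookie_env_def intro: order_trans[of 0 "1/2"])

lemma drift_at_bounds:
  assumes "cookie_env \<omega>"
  shows "0 \<le> drift_at x \<omega> y" "drift_at x \<omega> y \<le> 1"
  using cookie_env_bounds[OF assms, of y] by (auto simp: drift_at_def)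

lemma drift_n_nonneg: "cookie_env \<omega> \<Longrightarrow> 0 \<le> drift_n \<omega> X z n"
  unfolding drift_n_def cookie_env_def by (intro sum_nonneg) (auto simp: field_simps)

lemma drift_n_mono:
  assumes "cookie_env \<omega>" "n \<le> m"
  shows "drift_n \<omega> X z n \<le> drift_n \<omega> X z m"
proof -
  have "card {k. k < n \<and> X k = z} \<le> card {k. k < m \<and> X k = z}"
    using assms(2) by (intro card_mono) auto
  then show ?thesis
    using assms(1) unfolding drift_n_def cookie_env_def by (intro sum_mono2) (auto simp: field_simps)
qed

section \<open>Finite-horizon values of the stopped walk\<close>

text \<open>stopped_value st g r n \<omega> y is E_{y,\<omega>}[\<Sum>_{k < min n \<tau>} r(\<omega>_k, X_k) + g(X_{min n \<tau>})], where \<tau>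
  is the first time with st X_\<tau> and \<omega>_k is the environment left after the first k cookies
  have been eaten.\<close>

fun stopped_value ::
  "(int \<Rightarrow> bool) \<Rightarrow> (int \<Rightarrow> real) \<Rightarrow> (env \<Rightarrow> int \<Rightarrow> real) \<Rightarrow> nat \<Rightarrow> env \<Rightarrow> int \<Rightarrow> real"
where
  "stopped_value st g r 0 \<omega> y = g y"
| "stopped_value st g r (Suc n) \<omega> y = (if st y then g y else
     r \<omega> y + \<omega> y 0 * stopped_value st g r n (eat_cookie y \<omega>) (y + 1)
       + (1 - \<omega> y 0) * stopped_value st g r n (eat_cookie y \<omega>) (y - 1))"

lemma stopped_value_le_supersolution:
  assumes env: "\<And>\<omega> y. K \<omega> y \<Longrightarrow> cookie_env \<omega>"
    and step: "\<And>\<omega> y. K \<omega> y \<Longrightarrow> \<not> st y \<Longrightarrow>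
        K (eat_cookie y \<omega>) (y + 1) \<and> K (eat_cookie y \<omega>) (y - 1)"
    and initial: "\<And>\<omega> y. K \<omega> y \<Longrightarrow> g y \<le> V 0 \<omega> y"
    and stopped: "\<And>n \<omega> y. K \<omega> y \<Longrightarrow> st y \<Longrightarrow> g y \<le> V (Suc n) \<omega> y"
    and super: "\<And>n \<omega> y. K \<omega> y \<Longrightarrow> \<not> st y \<Longrightarrow>
        r \<omega> y + \<omega> y 0 * V n (eat_cookie y \<omega>) (y + 1)
          + (1 - \<omega> y 0) * V n (eat_cookie y \<omega>) (y - 1) \<le> V (Suc n) \<omega> y"
    and "K \<omega> y"
  shows "stopped_value st g r n \<omega> y \<le> V n \<omega> y"
  using \<open>K \<omega> y\<close>
proof (induction n arbitrary: \<omega> y)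
  case 0
  then show ?case using initial by simp
next
  case (Suc n)
  show ?case
  proof (cases "st y")
    case True
    then show ?thesis using stopped Suc.prems by simp
  next
    case False
    have "stopped_value st g r (Suc n) \<omega> y \<le>
        r \<omega> y + (\<omega> y 0 * V n (eat_cookie y \<omega>) (y + 1)
          + (1 - \<omega> y 0) * V n (eat_cookie y \<omega>) (y - 1))"
      using False Suc cookie_env_bounds[OF env[OF Suc.prems]] step
      by (auto simp del: stopped_value.simps(2) simp add: stopped_value.simps(2)[of _ _ _ n]
          intro!: convex_combination_mono)
    also have "\<dots> \<le> V (Suc n) \<omega> y"
      using super[of \<omega> y n] Suc.prems False by (simp add: add.assoc)
    finally show ?thesis .
  qed
qed

lemma stopped_value_uminus:
  "stopped_value st (\<lambda>y. - g y) (\<lambda>\<omega> y. - r \<omega> y) n \<omega> y = - stopped_value st g r n \<omega> y"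
  by (induction n arbitrary: \<omega> y) (simp_all add: algebra_simps)

lemma stopped_value_add:
  "stopped_value st (\<lambda>y. g y + h y) (\<lambda>_ _. 0) n \<omega> y
    = stopped_value st g (\<lambda>_ _. 0) n \<omega> y + stopped_value st h (\<lambda>_ _. 0) n \<omega> y"
  by (induction n arbitrary: \<omega> y) (simp_all add: algebra_simps)

lemma stopped_value_ge_subsolution:
  assumes env: "\<And>\<omega> y. K \<omega> y \<Longrightarrow> cookie_env \<omega>"
    and step: "\<And>\<omega> y. K \<omega> y \<Longrightarrow> \<not> st y \<Longrightarrow>
        K (eat_cookie y \<omega>) (y + 1) \<and> K (eat_cookie y \<omega>) (y - 1)"
    and initial: "\<And>\<omega> y. K \<omega> y \<Longrightarrow> V 0 \<omega> y \<le> g y"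
    and stopped: "\<And>n \<omega> y. K \<omega> y \<Longrightarrow> st y \<Longrightarrow> V (Suc n) \<omega> y \<le> g y"
    and sub: "\<And>n \<omega> y. K \<omega> y \<Longrightarrow> \<not> st y \<Longrightarrow>
        V (Suc n) \<omega> y \<le> r \<omega> y + \<omega> y 0 * V n (eat_cookie y \<omega>) (y + 1)
          + (1 - \<omega> y 0) * V n (eat_cookie y \<omega>) (y - 1)"
    and "K \<omega> y"
  shows "V n \<omega> y \<le> stopped_value st g r n \<omega> y"
proof -
  have "stopped_value st (\<lambda>y. - g y) (\<lambda>\<omega> y. - r \<omega> y) n \<omega> y \<le> - V n \<omega> y"
  proof (rule stopped_value_le_supersolution[where K = K and V = "\<lambda>n \<omega> y. - V n \<omega> y"])
    show "K \<omega> y \<Longrightarrow> cookie_env \<omega>" for \<omega> y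
      by (fact env)
    show "K \<omega> y \<Longrightarrow> \<not> st y \<Longrightarrow> K (eat_cookie y \<omega>) (y + 1) \<and> K (eat_cookie y \<omega>) (y - 1)" for \<omega> y
      by (fact step)
    show "K \<omega> y \<Longrightarrow> - g y \<le> - V 0 \<omega> y" for \<omega> y
      using initial by simp
    show "K \<omega> y \<Longrightarrow> st y \<Longrightarrow> - g y \<le> - V (Suc n) \<omega> y" for n \<omega> y
      using stopped by simp
    show "K \<omega> y \<Longrightarrow> \<not> st y \<Longrightarrow> - r \<omega> y + \<omega> y 0 * - V n (eat_cookie y \<omega>) (y + 1)
        + (1 - \<omega> y 0) * - V n (eat_cookie y \<omega>) (y - 1) \<le> - V (Suc n) \<omega> y" for n \<omega> y
      using sub[of \<omega> y n] by simp
  qed fact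
  then show ?thesis by (simp add: stopped_value_uminus)
qed

lemma stopped_value_nonneg:
  assumes "\<And>y. 0 \<le> g y" "\<And>\<omega> y. cookie_env \<omega> \<Longrightarrow> 0 \<le> r \<omega> y" "cookie_env \<omega>"
  shows "0 \<le> stopped_value st g r n \<omega> y"
  by (rule stopped_value_ge_subsolution[where K = "\<lambda>\<omega> y. cookie_env \<omega>" and V = "\<lambda>_ _ _. 0"])
    (simp_all add: cookie_env_eat_cookie assms)

lemma stopped_value_mono_time:
  assumes "\<And>\<omega> y. cookie_env \<omega> \<Longrightarrow> \<not> st y \<Longrightarrow>
      g y \<le> r \<omega> y + \<omega> y 0 * g (y + 1) + (1 - \<omega> y 0) * g (y - 1)"
    and "cookie_env \<omega>" "n \<le> m"
  shows "stopped_value st g r n \<omega> y \<le> stopped_value st g r m \<omega> y"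
proof -
  have "stopped_value st g r k \<omega> y \<le> stopped_value st g r (Suc k) \<omega> y" for k
  proof (rule stopped_value_le_supersolution[where K = "\<lambda>\<omega> y. cookie_env \<omega>"
        and V = "\<lambda>k. stopped_value st g r (Suc k)"])
    show "g y \<le> stopped_value st g r (Suc 0) \<omega> y" if "cookie_env \<omega>" for \<omega> y
      using assms(1)[OF that] by simp
  qed (simp_all add: cookie_env_eat_cookie assms(2))
  then show ?thesis
    using lift_Suc_mono_le[of "\<lambda>k. stopped_value st g r k \<omega> y"] assms(3) by blast
qed

definition expected_drift :: "int \<Rightarrow> nat \<Rightarrow> env \<Rightarrow> int \<Rightarrow> real" where
  "expected_drift x = stopped_value (\<lambda>_. False) (\<lambda>_. 0) (drift_at x)"

definition stopped_drift :: "int \<Rightarrow> int \<Rightarrow> nat \<Rightarrow> env \<Rightarrow> int \<Rightarrow> real" where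
  "stopped_drift x N = stopped_value (\<lambda>z. z = N) (\<lambda>_. 0) (drift_at x)"

definition stopped_total_drift :: "int \<Rightarrow> nat \<Rightarrow> env \<Rightarrow> int \<Rightarrow> real" where
  "stopped_total_drift N = stopped_value (\<lambda>z. z = N) (\<lambda>_. 0) (\<lambda>\<omega> y. 2 * \<omega> y 0 - 1)"

lemma expected_drift_0 [simp]: "expected_drift x 0 \<omega> y = 0"
  and expected_drift_Suc: "expected_drift x (Suc n) \<omega> y = drift_at x \<omega> y
      + \<omega> y 0 * expected_drift x n (eat_cookie y \<omega>) (y + 1)
      + (1 - \<omega> y 0) * expected_drift x n (eat_cookie y \<omega>) (y - 1)"
  by (simp_all add: expected_drift_def)

lemma stopped_drift_0 [simp]: "stopped_drift x N 0 \<omega> y = 0"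
  and stopped_drift_target [simp]: "stopped_drift x N n \<omega> N = 0"
  and stopped_drift_Suc: "y \<noteq> N \<Longrightarrow> stopped_drift x N (Suc n) \<omega> y = drift_at x \<omega> y
      + \<omega> y 0 * stopped_drift x N n (eat_cookie y \<omega>) (y + 1)
      + (1 - \<omega> y 0) * stopped_drift x N n (eat_cookie y \<omega>) (y - 1)"
  by (simp_all add: stopped_drift_def, cases n, simp_all)

lemma expected_drift_nonneg: "cookie_env \<omega> \<Longrightarrow> 0 \<le> expected_drift x n \<omega> y"
  unfolding expected_drift_def by (rule stopped_value_nonneg) (simp_all add: drift_at_bounds)

lemma stopped_drift_nonneg: "cookie_env \<omega> \<Longrightarrow> 0 \<le> stopped_drift x N n \<omega> y"
  unfolding stopped_drift_def by (rule stopped_value_nonneg) (simp_all add: drift_at_bounds)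

lemma expected_drift_mono:
  "cookie_env \<omega> \<Longrightarrow> n \<le> m \<Longrightarrow> expected_drift x n \<omega> y \<le> expected_drift x m \<omega> y"
  unfolding expected_drift_def by (rule stopped_value_mono_time) (simp_all add: drift_at_bounds)

lemma stopped_drift_mono:
  "cookie_env \<omega> \<Longrightarrow> n \<le> m \<Longrightarrow> stopped_drift x N n \<omega> y \<le> stopped_drift x N m \<omega> y"
  unfolding stopped_drift_def by (rule stopped_value_mono_time) (simp_all add: drift_at_bounds)

lemma expected_drift_eq_stopped_drift:
  "y + int n \<le> N \<Longrightarrow> expected_drift x n \<omega> y = stopped_drift x N n \<omega> y"
proof (induction n arbitrary: \<omega> y)
  case (Suc n)
  then show ?case by (simp add: expected_drift_Suc stopped_drift_Suc)
qed simp

lemma stopped_drift_mono_target: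
  assumes "cookie_env \<omega>" "y \<le> N" "N \<le> N'"
  shows "stopped_drift x N n \<omega> y \<le> stopped_drift x N' n \<omega> y"
  unfolding stopped_drift_def
proof (rule stopped_value_le_supersolution[where K = "\<lambda>\<omega> y. cookie_env \<omega> \<and> y \<le> N"])
  show "0 \<le> stopped_value (\<lambda>z. z = N') (\<lambda>_. 0) (drift_at x) (Suc n) \<omega> y"
    if "cookie_env \<omega> \<and> y \<le> N" for n \<omega> y
    using that by (intro stopped_value_nonneg) (simp_all add: drift_at_bounds)
qed (use assms in \<open>auto simp: cookie_env_eat_cookie\<close>)

lemma sum_stopped_drift_le_total:
  assumes "finite Z" "cookie_env \<omega>"
  shows "(\<Sum>z\<in>Z. stopped_drift z N n \<omega> y) \<le> stopped_total_drift N n \<omega> y"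
  unfolding stopped_total_drift_def
proof (rule stopped_value_ge_subsolution[where K = "\<lambda>\<omega> y. cookie_env \<omega>"])
  fix n \<omega> y
  assume "cookie_env \<omega>" "y \<noteq> N"
  have "(\<Sum>z\<in>Z. drift_at z \<omega> y) \<le> 2 * \<omega> y 0 - 1"
    using cookie_env_bounds[OF \<open>cookie_env \<omega>\<close>, of y] assms(1)
    by (simp add: drift_at_def sum.delta)
  then show "(\<Sum>z\<in>Z. stopped_drift z N (Suc n) \<omega> y) \<le> 2 * \<omega> y 0 - 1
      + \<omega> y 0 * (\<Sum>z\<in>Z. stopped_drift z N n (eat_cookie y \<omega>) (y + 1))
      + (1 - \<omega> y 0) * (\<Sum>z\<in>Z. stopped_drift z N n (eat_cookie y \<omega>) (y - 1))"
    using \<open>y \<noteq> N\<close> by (simp add: stopped_drift_Suc sum.distrib sum_distrib_left)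
qed (use assms in \<open>simp_all add: cookie_env_eat_cookie\<close>)

text \<open>The position of the walk minus the drift eaten so far is a martingale, and the walk stopped
  at N stays below N.\<close>

lemma stopped_total_drift_le:
  assumes "cookie_env \<omega>" "y \<le> N"
  shows "stopped_total_drift N n \<omega> y \<le> N - y"
  unfolding stopped_total_drift_def
proof (rule stopped_value_le_supersolution[where K = "\<lambda>\<omega> y. cookie_env \<omega> \<and> y \<le> N"
      and V = "\<lambda>_ _ y. of_int (N - y)"])
  show "2 * \<omega> y 0 - 1 + \<omega> y 0 * of_int (N - (y + 1)) + (1 - \<omega> y 0) * of_int (N - (y - 1))
      \<le> real_of_int (N - y)" for \<omega> y
    by (simp add: algebra_simps)
qed (use assms in \<open>auto simp: cookie_env_eat_cookie\<close>)

definition shift_env :: "int \<Rightarrow> env \<Rightarrow> env" where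
  "shift_env k \<omega> = (\<lambda>z. \<omega> (z + k))"

lemma cookie_env_shift_env: "cookie_env \<omega> \<Longrightarrow> cookie_env (shift_env k \<omega>)"
  by (simp add: cookie_env_def shift_env_def)

lemma stopped_drift_shift:
  "stopped_drift (x + k) (N + k) n \<omega> y = stopped_drift x N n (shift_env k \<omega>) (y - k)"
proof (induction n arbitrary: \<omega> y)
  case (Suc n)
  have "shift_env k (eat_cookie y \<omega>) = eat_cookie (y - k) (shift_env k \<omega>)"
    by (auto simp: shift_env_def eat_cookie_def)
  then show ?case
    using Suc[of "eat_cookie y \<omega>"]
    by (cases "y = N + k") (auto simp: stopped_drift_Suc drift_at_def shift_env_def algebra_simps)
qed simp

definition stopped_drift_sup :: "int \<Rightarrow> int \<Rightarrow> env \<Rightarrow> int \<Rightarrow> ennreal" where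
  "stopped_drift_sup x N \<omega> y = (SUP n. ennreal (stopped_drift x N n \<omega> y))"

lemma incseq_stopped_drift: "cookie_env \<omega> \<Longrightarrow> incseq (\<lambda>n. ennreal (stopped_drift x N n \<omega> y))"
  by (auto simp: incseq_def intro!: ennreal_leI stopped_drift_mono)

lemma ennreal_stopped_drift_Suc:
  assumes "cookie_env \<omega>" "y \<noteq> N"
  shows "ennreal (stopped_drift x N (Suc n) \<omega> y) = ennreal (drift_at x \<omega> y)
      + ennreal (\<omega> y 0) * ennreal (stopped_drift x N n (eat_cookie y \<omega>) (y + 1))
      + ennreal (1 - \<omega> y 0) * ennreal (stopped_drift x N n (eat_cookie y \<omega>) (y - 1))"
proof -
  have s: "0 \<le> stopped_drift x N n (eat_cookie y \<omega>) z" for z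
    using assms(1) by (intro stopped_drift_nonneg cookie_env_eat_cookie)
  note p = cookie_env_bounds[OF assms(1), of y]
  then have "0 \<le> \<omega> y 0 * stopped_drift x N n (eat_cookie y \<omega>) z"
    "0 \<le> (1 - \<omega> y 0) * stopped_drift x N n (eat_cookie y \<omega>) z" for z
    using s by simp_all
  then show ?thesis
    using assms p s drift_at_bounds[OF assms(1)] by (simp add: stopped_drift_Suc ennreal_mult)
qed

lemma stopped_drift_sup_step:
  assumes "cookie_env \<omega>" "y \<noteq> N"
  shows "stopped_drift_sup x N \<omega> y = ennreal (drift_at x \<omega> y)
      + ennreal (\<omega> y 0) * stopped_drift_sup x N (eat_cookie y \<omega>) (y + 1)
      + ennreal (1 - \<omega> y 0) * stopped_drift_sup x N (eat_cookie y \<omega>) (y - 1)"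
proof -
  define f where "f z n = ennreal (stopped_drift x N n (eat_cookie y \<omega>) z)" for z n
  have inc: "incseq (\<lambda>n. ennreal c * f z n)" for c z
    unfolding f_def using incseq_stopped_drift[OF cookie_env_eat_cookie[OF assms(1)]]
    by (auto simp: incseq_def mult_left_mono)
  have "stopped_drift_sup x N \<omega> y = (SUP n. ennreal (stopped_drift x N (Suc n) \<omega> y))"
    unfolding stopped_drift_sup_def using incseq_stopped_drift[OF assms(1)] by (rule SUP_Suc_eq[symmetric])
  also have "\<dots> = (SUP n. ennreal (drift_at x \<omega> y)
      + (ennreal (\<omega> y 0) * f (y + 1) n + ennreal (1 - \<omega> y 0) * f (y - 1) n))"
    by (simp add: ennreal_stopped_drift_Suc[OF assms] f_def add.assoc)
  also have "\<dots> = ennreal (drift_at x \<omega> y)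
      + ((SUP n. ennreal (\<omega> y 0) * f (y + 1) n) + (SUP n. ennreal (1 - \<omega> y 0) * f (y - 1) n))"
    unfolding ennreal_SUP_add[OF inc inc, symmetric] by (simp add: ennreal_SUP_add_right)
  also have "\<dots> = ennreal (drift_at x \<omega> y)
      + ennreal (\<omega> y 0) * stopped_drift_sup x N (eat_cookie y \<omega>) (y + 1)
      + ennreal (1 - \<omega> y 0) * stopped_drift_sup x N (eat_cookie y \<omega>) (y - 1)"
    by (simp add: stopped_drift_sup_def f_def SUP_mult_left_ennreal add.assoc)
  finally show ?thesis .
qed

lemma stopped_drift_sup_step_neg:
  assumes "cookie_env \<omega>" "y < 0" "0 \<le> x" "0 \<le> N"
  shows "stopped_drift_sup x N \<omega> y = ennreal (\<omega> y 0) * stopped_drift_sup x N (eat_cookie y \<omega>) (y + 1)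
      + ennreal (1 - \<omega> y 0) * stopped_drift_sup x N (eat_cookie y \<omega>) (y - 1)"
  using stopped_drift_sup_step[OF assms(1), of y N x] assms(2-4) by (simp add: drift_at_def)

section \<open>Leaving a strip to the left of the origin\<close>

definition out_of_strip :: "int \<Rightarrow> int \<Rightarrow> bool" where
  "out_of_strip L y \<longleftrightarrow> 0 \<le> y \<or> y \<le> - L"

definition hit_zero_first :: "int \<Rightarrow> nat \<Rightarrow> env \<Rightarrow> int \<Rightarrow> real" where
  "hit_zero_first L = stopped_value (out_of_strip L) (\<lambda>y. if 0 \<le> y then 1 else 0) (\<lambda>_ _. 0)"

definition still_in_strip :: "int \<Rightarrow> nat \<Rightarrow> env \<Rightarrow> int \<Rightarrow> real" where
  "still_in_strip L = stopped_value (out_of_strip L) (\<lambda>y. if out_of_strip L y then 0 else 1) (\<lambda>_ _. 0)"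

definition strip_state :: "int \<Rightarrow> env \<Rightarrow> int \<Rightarrow> bool" where
  "strip_state L \<omega> y \<longleftrightarrow> cookie_env \<omega> \<and> - L \<le> y \<and> y \<le> 0"

lemma strip_state_step:
  "strip_state L \<omega> y \<Longrightarrow> \<not> out_of_strip L y \<Longrightarrow>
    strip_state L (eat_cookie y \<omega>) (y + 1) \<and> strip_state L (eat_cookie y \<omega>) (y - 1)"
  by (auto simp: strip_state_def out_of_strip_def cookie_env_eat_cookie)

text \<open>The walk has nonnegative drift, so its position is a submartingale.\<close>

lemma exit_strip_linear_bound:
  assumes "0 < L" "strip_state L \<omega> y"
  shows "of_int (y + L) / of_int L \<le> hit_zero_first L j \<omega> y + still_in_strip L j \<omega> y"
proof -
  have payoff: "(y + L) / L \<le> (if - L < y then 1 else 0)" if "strip_state L \<omega> y" for \<omega> y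
    using that \<open>0 < L\<close> by (auto simp: strip_state_def)
  have "(y + L) / L \<le> stopped_value (out_of_strip L) (\<lambda>y. if - L < y then 1 else 0) (\<lambda>_ _. 0) j \<omega> y"
  proof (rule stopped_value_ge_subsolution[where K = "strip_state L"])
    show "(y + L) / L \<le> 0 + \<omega> y 0 * ((y + 1 + L) / L) + (1 - \<omega> y 0) * ((y - 1 + L) / L)"
      if "strip_state L \<omega> y" for \<omega> y
      using that \<open>0 < L\<close> cookie_env_bounds[of \<omega> y] by (simp add: strip_state_def field_simps)
    show "strip_state L \<omega> y \<Longrightarrow> cookie_env \<omega>" for \<omega> y
      by (simp add: strip_state_def)
    show "strip_state L \<omega> y \<Longrightarrow> \<not> out_of_strip L y \<Longrightarrow>
        strip_state L (eat_cookie y \<omega>) (y + 1) \<and> strip_state L (eat_cookie y \<omega>) (y - 1)" for \<omega> y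
      by (rule strip_state_step)
  qed (use payoff assms(2) in blast)+
  also have "(\<lambda>y. if - L < y then 1 else 0)
      = (\<lambda>y. (if 0 \<le> y then 1 else 0) + (if out_of_strip L y then 0 else 1 :: real))"
    using \<open>0 < L\<close> by (auto simp: out_of_strip_def fun_eq_iff)
  also have "stopped_value (out_of_strip L) \<dots> (\<lambda>_ _. 0) j \<omega> y
      = hit_zero_first L j \<omega> y + still_in_strip L j \<omega> y"
    unfolding hit_zero_first_def still_in_strip_def by (rule stopped_value_add)
  finally show ?thesis by simp
qed

lemma still_in_strip_le_1: "cookie_env \<omega> \<Longrightarrow> still_in_strip L j \<omega> y \<le> 1"
  unfolding still_in_strip_def
  by (rule stopped_value_le_supersolution[where K = "\<lambda>\<omega> y. cookie_env \<omega>" and V = "\<lambda>_ _ _. 1"])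
    (simp_all add: cookie_env_eat_cookie)

text \<open>(X + L)^2 grows by at least 1 per step in expectation, and stays below L^2 inside the strip.\<close>

lemma still_in_strip_time_bound:
  assumes "strip_state L \<omega> y"
  shows "real j * still_in_strip L j \<omega> y \<le> of_int (L^2 - (y + L)^2)"
  using assms
proof (induction j arbitrary: \<omega> y)
  case 0
  then show ?case by (simp add: strip_state_def power_mono)
next
  case (Suc j)
  show ?case
  proof (cases "out_of_strip L y")
    case True
    then show ?thesis using Suc.prems by (simp add: still_in_strip_def strip_state_def power_mono)
  next
    case False
    define p where "p = \<omega> y 0"
    define u where "u = real_of_int (y + L)"
    have p: "1/2 \<le> p" "p \<le> 1" and "0 \<le> u"
      using cookie_env_bounds[of \<omega> y] False Suc.prems by (auto simp: p_def u_def strip_state_def out_of_strip_def)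
    have "of_int (L^2 - (y + 1 + L)^2) = L^2 - (u + 1)^2" "of_int (L^2 - (y - 1 + L)^2) = L^2 - (u - 1)^2"
      by (simp_all add: u_def algebra_simps)
    then have IH: "real j * still_in_strip L j (eat_cookie y \<omega>) (y + 1) \<le> L^2 - (u + 1)^2"
      "real j * still_in_strip L j (eat_cookie y \<omega>) (y - 1) \<le> L^2 - (u - 1)^2"
      using Suc.IH strip_state_step[OF Suc.prems False] by metis+
    have rec: "still_in_strip L (Suc j) \<omega> y = p * still_in_strip L j (eat_cookie y \<omega>) (y + 1)
        + (1 - p) * still_in_strip L j (eat_cookie y \<omega>) (y - 1)"
      using False by (simp add: still_in_strip_def p_def)
    have "real (Suc j) * still_in_strip L (Suc j) \<omega> y
        = p * (real j * still_in_strip L j (eat_cookie y \<omega>) (y + 1))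
          + (1 - p) * (real j * still_in_strip L j (eat_cookie y \<omega>) (y - 1))
          + still_in_strip L (Suc j) \<omega> y"
      unfolding rec by (simp add: algebra_simps)
    also have "\<dots> \<le> p * (L^2 - (u + 1)^2) + (1 - p) * (L^2 - (u - 1)^2) + 1"
      using IH p still_in_strip_le_1[of \<omega> L "Suc j" y] Suc.prems
      by (intro add_mono convex_combination_mono) (auto simp: strip_state_def)
    also have "\<dots> = L^2 - u^2 - 2 * u * (2 * p - 1)"
      by (simp add: power2_eq_square algebra_simps)
    also have "\<dots> \<le> of_int (L^2 - (y + L)^2)"
      using p \<open>0 \<le> u\<close> by (simp add: u_def)
    finally show ?thesis .
  qed
qed

lemma hit_zero_first_lower_bound:
  assumes "0 < L" "strip_state L \<omega> y" "0 < j"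
  shows "of_int (y + L) / of_int L - of_int L ^ 2 / real j \<le> hit_zero_first L j \<omega> y"
proof -
  have "real j * still_in_strip L j \<omega> y \<le> L^2"
    using still_in_strip_time_bound[OF assms(2), of j] by (smt (verit) of_int_le_iff zero_le_power2)
  then have "still_in_strip L j \<omega> y \<le> L^2 / j"
    using assms(3) by (simp add: field_simps)
  then show ?thesis
    using exit_strip_linear_bound[OF assms(1,2), of j] by simp
qed

lemma stopped_drift_sup_ge_hit_zero_first:
  assumes "0 \<le> x" "0 \<le> N" "0 \<le> c"
    and at_zero: "\<And>\<omega>'. cookie_env \<omega>' \<Longrightarrow> \<forall>z\<ge>0. \<omega>' z = \<omega> z \<Longrightarrow>
        ennreal c \<le> stopped_drift_sup x N \<omega>' 0"
    and "strip_state L \<omega>' y" "\<forall>z\<ge>0. \<omega>' z = \<omega> z"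
  shows "ennreal (c * hit_zero_first L j \<omega>' y) \<le> stopped_drift_sup x N \<omega>' y"
proof -
  have stopped: "ennreal (c * (if 0 \<le> y then 1 else 0)) \<le> stopped_drift_sup x N \<omega>' y"
    if "strip_state L \<omega>' y" "\<forall>z\<ge>0. \<omega>' z = \<omega> z" for \<omega>' y
    using that at_zero[of \<omega>'] by (auto simp: strip_state_def)
  show ?thesis
    using assms(5,6)
  proof (induction j arbitrary: \<omega>' y)
    case 0
    then show ?case using stopped by (simp add: hit_zero_first_def)
  next
    case (Suc j)
    show ?case
    proof (cases "out_of_strip L y")
      case True
      then show ?thesis using stopped Suc.prems by (simp add: hit_zero_first_def)
    next
      case False
      define p where "p = \<omega>' y 0"
      define h where "h z = hit_zero_first L j (eat_cookie y \<omega>') z" for z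
      have env: "cookie_env \<omega>'" using Suc.prems by (simp add: strip_state_def)
      have "y < 0" using False by (simp add: out_of_strip_def)
      have agree: "\<forall>z\<ge>0. eat_cookie y \<omega>' z = \<omega> z"
        using Suc.prems(2) \<open>y < 0\<close> by (simp add: eat_cookie_def)
      have h: "0 \<le> c * h z" for z
        unfolding h_def hit_zero_first_def using assms(3)
        by (intro mult_nonneg_nonneg stopped_value_nonneg) (simp_all add: cookie_env_eat_cookie env)
      have "c * hit_zero_first L (Suc j) \<omega>' y = p * (c * h (y + 1)) + (1 - p) * (c * h (y - 1))"
        using False by (simp add: hit_zero_first_def h_def p_def algebra_simps)
      then have "ennreal (c * hit_zero_first L (Suc j) \<omega>' y)
          = ennreal p * ennreal (c * h (y + 1)) + ennreal (1 - p) * ennreal (c * h (y - 1))"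
        using cookie_env_bounds[OF env, of y] h
        by (simp only:) (intro ennreal_convex_combination, simp_all add: p_def)
      also have "\<dots> \<le> ennreal p * stopped_drift_sup x N (eat_cookie y \<omega>') (y + 1)
          + ennreal (1 - p) * stopped_drift_sup x N (eat_cookie y \<omega>') (y - 1)"
        using Suc.IH strip_state_step[OF Suc.prems(1) False] agree
        by (intro add_mono mult_left_mono) (simp_all add: h_def)
      also have "\<dots> = stopped_drift_sup x N \<omega>' y"
        using stopped_drift_sup_step_neg[OF env \<open>y < 0\<close> assms(1,2)] by (simp add: p_def)
      finally show ?thesis .
    qed
  qed
qed

text \<open>Started at -k, the walk returns to 0 with probability 1; there it finds the cookies at
  the nonnegative sites untouched.\<close>

lemma stopped_drift_sup_return:
  assumes "cookie_env \<omega>" "0 \<le> x" "0 \<le> N" "0 \<le> c"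
    and at_zero: "\<And>\<omega>'. cookie_env \<omega>' \<Longrightarrow> \<forall>z\<ge>0. \<omega>' z = \<omega> z \<Longrightarrow>
        ennreal c \<le> stopped_drift_sup x N \<omega>' 0"
  shows "ennreal c \<le> stopped_drift_sup x N \<omega> (- int k)"
proof (rule LIMSEQ_le_const2)
  show "(\<lambda>n. ennreal (c * (1 + - inverse (real (Suc n))))) \<longlonglongrightarrow> ennreal c"
    by (intro tendsto_ennrealI LIMSEQ_inverse_real_of_nat_add_minus_mult)
  have "ennreal (c * (1 + - inverse (real (Suc n)))) \<le> stopped_drift_sup x N \<omega> (- int k)" for n
  proof -
    define L where "L = (k + 1) * (n + 1)"
    have "0 < L" "k \<le> L" by (simp_all add: L_def)
    have "real L = (real k + 1) * real (Suc n)" "real k + 1 \<noteq> 0"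
      by (simp_all add: L_def algebra_simps)
    then have "(real k + 1) / real L = inverse (real (Suc n))"
      by (simp add: divide_inverse)
    then have "1 + - inverse (real (Suc n)) = 1 - (real k + 1) / real L"
      by simp
    also have "\<dots> = of_int (- int k + int L) / of_int (int L) - of_int (int L) ^ 2 / real (L^3)"
      using \<open>0 < L\<close> by (simp add: field_simps power2_eq_square power3_eq_cube)
    also have "\<dots> \<le> hit_zero_first (int L) (L^3) \<omega> (- int k)"
      using \<open>0 < L\<close> \<open>k \<le> L\<close> assms(1) by (intro hit_zero_first_lower_bound) (simp_all add: strip_state_def)
    finally have "ennreal (c * (1 + - inverse (real (Suc n)))) \<le> ennreal (c * hit_zero_first (int L) (L^3) \<omega> (- int k))"
      using assms(4) by (intro ennreal_leI mult_left_mono)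
    also have "\<dots> \<le> stopped_drift_sup x N \<omega> (- int k)"
      using assms \<open>k \<le> L\<close> by (intro stopped_drift_sup_ge_hit_zero_first) (auto simp: strip_state_def)
    finally show ?thesis .
  qed
  then show "\<exists>m. \<forall>n\<ge>m. ennreal (c * (1 + - inverse (real (Suc n)))) \<le> stopped_drift_sup x N \<omega> (- int k)"
    by blast
qed

section \<open>Cookies of strength one left of the origin\<close>

text \<open>In reset_left \<omega> a step to -1 is undone at once, so the walk only sees \<omega> on the nonnegative
  sites.\<close>

definition reset_left :: "env \<Rightarrow> env" where
  "reset_left \<omega> = (\<lambda>z. if 0 \<le> z then \<omega> z else (\<lambda>_. 1))"

lemma cookie_env_reset_left: "cookie_env \<omega> \<Longrightarrow> cookie_env (reset_left \<omega>)"
  by (simp add: cookie_env_def reset_left_def)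

lemma reset_left_nonneg: "0 \<le> y \<Longrightarrow> reset_left \<omega> y = \<omega> y"
  by (simp add: reset_left_def)

lemma reset_left_eat_cookie:
  "reset_left (eat_cookie y \<omega>) = (if 0 \<le> y then eat_cookie y (reset_left \<omega>) else reset_left \<omega>)"
  by (auto simp: reset_left_def eat_cookie_def)

lemma eat_cookie_reset_left: "y < 0 \<Longrightarrow> eat_cookie y (reset_left \<omega>) = reset_left \<omega>"
  by (auto simp: reset_left_def eat_cookie_def)

lemma reset_left_cong: "\<forall>z\<ge>0. \<omega>' z = \<omega> z \<Longrightarrow> reset_left \<omega>' = reset_left \<omega>"
  by (auto simp: reset_left_def)

lemma reset_left_env_shift_restr: "reset_left (env_shift_restr k \<omega>) = reset_left (shift_env (int k) \<omega>)"
  by (simp add: reset_left_def env_shift_restr_def shift_env_def fun_eq_iff)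

lemma stopped_drift_reset_left_neg_one:
  assumes "cookie_env \<omega>" "0 \<le> x" "0 \<le> N"
  shows "stopped_drift x N (Suc n) (reset_left \<omega>) (- 1) = stopped_drift x N n (reset_left \<omega>) 0"
  using assms by (simp add: stopped_drift_Suc drift_at_def eat_cookie_reset_left) (simp add: reset_left_def)

lemma stopped_drift_reset_left_neg_one_le:
  assumes "cookie_env \<omega>" "0 \<le> x" "0 \<le> N"
  shows "stopped_drift x N m (reset_left \<omega>) (- 1) \<le> stopped_drift x N m (reset_left \<omega>) 0"
proof (cases m)
  case (Suc n)
  then show ?thesis
    using assms stopped_drift_mono[OF cookie_env_reset_left[OF assms(1)], of n m]
    by (simp add: stopped_drift_reset_left_neg_one)
qed simp

lemma stopped_drift_sup_reset_left_neg_one: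
  assumes "cookie_env \<omega>" "0 \<le> x" "0 \<le> N"
  shows "stopped_drift_sup x N (reset_left \<omega>) (- 1) = stopped_drift_sup x N (reset_left \<omega>) 0"
  using stopped_drift_sup_step_neg[OF cookie_env_reset_left[OF assms(1)], of "- 1" x N] assms
  by (simp add: eat_cookie_reset_left) (simp add: reset_left_def)

lemma stopped_drift_le_sup_reset_left:
  assumes "0 \<le> x" "0 \<le> N" "cookie_env \<omega>"
  shows "ennreal (stopped_drift x N n \<omega> y) \<le> stopped_drift_sup x N (reset_left \<omega>) (max y 0)"
  using assms(3)
proof (induction n arbitrary: \<omega> y)
  case (Suc n)
  show ?case
  proof (cases "y = N")
    case False
    define \<omega>\<^sub>1 where "\<omega>\<^sub>1 = eat_cookie y \<omega>"
    define A where "A z = stopped_drift_sup x N (reset_left \<omega>\<^sub>1) (max z 0)" for z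
    have env: "cookie_env \<omega>\<^sub>1" "cookie_env (reset_left \<omega>)"
      using Suc.prems by (simp_all add: \<omega>\<^sub>1_def cookie_env_eat_cookie cookie_env_reset_left)
    have "ennreal (stopped_drift x N (Suc n) \<omega> y)
        \<le> ennreal (drift_at x \<omega> y) + ennreal (\<omega> y 0) * A (y + 1) + ennreal (1 - \<omega> y 0) * A (y - 1)"
      unfolding ennreal_stopped_drift_Suc[OF Suc.prems False] A_def \<omega>\<^sub>1_def
      using Suc.IH[OF env(1)[unfolded \<omega>\<^sub>1_def]] by (intro add_mono mult_left_mono) simp_all
    also have "\<dots> \<le> stopped_drift_sup x N (reset_left \<omega>) (max y 0)"
    proof (cases "0 \<le> y")
      case True
      have "A (y - 1) = stopped_drift_sup x N (reset_left \<omega>\<^sub>1) (y - 1)"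
        using True stopped_drift_sup_reset_left_neg_one[OF env(1) assms(1,2)]
        by (cases "y = 0") (simp_all add: A_def)
      then show ?thesis
        using True stopped_drift_sup_step[OF env(2) False, of x]
        by (simp add: A_def \<omega>\<^sub>1_def reset_left_eat_cookie) (simp add: reset_left_def drift_at_def)
    next
      case False
      then have "A (y + 1) = stopped_drift_sup x N (reset_left \<omega>) (max y 0)"
        "A (y - 1) = stopped_drift_sup x N (reset_left \<omega>) (max y 0)" "drift_at x \<omega> y = 0"
        using assms(1) by (simp_all add: A_def \<omega>\<^sub>1_def reset_left_eat_cookie drift_at_def)
      then show ?thesis
        using cookie_env_bounds[OF Suc.prems, of y]
        by (simp add: distrib_right[symmetric] flip: ennreal_plus)
    qed
    finally show ?thesis .
  qed simp
qed simp

lemma stopped_drift_reset_left_neg_one_le_sup: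
  assumes "0 \<le> x" "0 \<le> N" "cookie_env \<omega>"
    and at_zero: "\<And>\<omega>'. cookie_env \<omega>' \<Longrightarrow> \<forall>z\<ge>0. \<omega>' z = \<omega> z \<Longrightarrow>
        ennreal (stopped_drift x N m (reset_left \<omega>') 0) \<le> stopped_drift_sup x N \<omega>' 0"
  shows "ennreal (stopped_drift x N m (reset_left \<omega>) (- 1)) \<le> stopped_drift_sup x N \<omega> (- 1)"
proof -
  have "ennreal (stopped_drift x N m (reset_left \<omega>) (- 1)) \<le> ennreal (stopped_drift x N m (reset_left \<omega>) 0)"
    using stopped_drift_reset_left_neg_one_le[OF assms(3,1,2)] by (rule ennreal_leI)
  also have "\<dots> \<le> stopped_drift_sup x N \<omega> (- int 1)"
  proof (rule stopped_drift_sup_return[OF assms(3,1,2)])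
    show "0 \<le> stopped_drift x N m (reset_left \<omega>) 0"
      using assms(3) by (simp add: stopped_drift_nonneg cookie_env_reset_left)
    show "ennreal (stopped_drift x N m (reset_left \<omega>) 0) \<le> stopped_drift_sup x N \<omega>' 0"
      if "cookie_env \<omega>'" "\<forall>z\<ge>0. \<omega>' z = \<omega> z" for \<omega>'
      using at_zero[OF that] reset_left_cong[OF that(2)] by simp
  qed
  finally show ?thesis by simp
qed

lemma stopped_drift_reset_left_le_sup:
  assumes "0 \<le> x" "cookie_env \<omega>" "0 \<le> y" "y \<le> N"
  shows "ennreal (stopped_drift x N m (reset_left \<omega>) y) \<le> stopped_drift_sup x N \<omega> y"
  using assms(2-4)
proof (induction m arbitrary: \<omega> y)
  case (Suc m)
  show ?case
  proof (cases "y = N")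
    case False
    define \<omega>\<^sub>1 where "\<omega>\<^sub>1 = eat_cookie y \<omega>"
    have env: "cookie_env \<omega>\<^sub>1"
      using Suc.prems by (simp add: \<omega>\<^sub>1_def cookie_env_eat_cookie)
    have right: "ennreal (stopped_drift x N m (reset_left \<omega>\<^sub>1) (y + 1)) \<le> stopped_drift_sup x N \<omega>\<^sub>1 (y + 1)"
      using Suc.IH[OF env] Suc.prems False by simp
    have left: "ennreal (stopped_drift x N m (reset_left \<omega>\<^sub>1) (y - 1)) \<le> stopped_drift_sup x N \<omega>\<^sub>1 (y - 1)"
    proof (cases "y = 0")
      case True
      then show ?thesis
        using stopped_drift_reset_left_neg_one_le_sup[OF assms(1) _ env] Suc.IH Suc.prems by simp
    next
      case False
      then show ?thesis using Suc.IH[OF env] Suc.prems by simp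
    qed
    have "ennreal (stopped_drift x N (Suc m) (reset_left \<omega>) y) = ennreal (drift_at x \<omega> y)
        + ennreal (\<omega> y 0) * ennreal (stopped_drift x N m (reset_left \<omega>\<^sub>1) (y + 1))
        + ennreal (1 - \<omega> y 0) * ennreal (stopped_drift x N m (reset_left \<omega>\<^sub>1) (y - 1))"
      using ennreal_stopped_drift_Suc[OF cookie_env_reset_left[OF Suc.prems(1)] False] Suc.prems
      by (simp add: \<omega>\<^sub>1_def reset_left_eat_cookie reset_left_nonneg drift_at_def)
    also have "\<dots> \<le> ennreal (drift_at x \<omega> y)
        + ennreal (\<omega> y 0) * stopped_drift_sup x N \<omega>\<^sub>1 (y + 1)
        + ennreal (1 - \<omega> y 0) * stopped_drift_sup x N \<omega>\<^sub>1 (y - 1)"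
      using right left by (intro add_mono mult_left_mono) simp_all
    also have "\<dots> = stopped_drift_sup x N \<omega> y"
      using stopped_drift_sup_step[OF Suc.prems(1) False] by (simp add: \<omega>\<^sub>1_def)
    finally show ?thesis .
  qed simp
qed simp

lemma stopped_drift_sup_reset_left_le:
  assumes "cookie_env \<omega>" "0 \<le> x" "0 \<le> N"
  shows "stopped_drift_sup x N (reset_left \<omega>) 0 \<le> stopped_drift_sup x N \<omega> (- int k)"
  unfolding stopped_drift_sup_def[of x N "reset_left \<omega>"]
proof (rule SUP_least)
  fix m
  show "ennreal (stopped_drift x N m (reset_left \<omega>) 0) \<le> stopped_drift_sup x N \<omega> (- int k)"
  proof (rule stopped_drift_sup_return[OF assms])
    show "0 \<le> stopped_drift x N m (reset_left \<omega>) 0"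
      using assms(1) by (simp add: stopped_drift_nonneg cookie_env_reset_left)
    show "ennreal (stopped_drift x N m (reset_left \<omega>) 0) \<le> stopped_drift_sup x N \<omega>' 0"
      if "cookie_env \<omega>'" "\<forall>z\<ge>0. \<omega>' z = \<omega> z" for \<omega>'
      using stopped_drift_reset_left_le_sup[OF assms(2) that(1), of 0 N m] assms(3)
        reset_left_cong[OF that(2)] by simp
  qed
qed

lemma sum_stopped_drift_sup_le:
  assumes "finite Z" "cookie_env \<omega>" "y \<le> N"
  shows "(\<Sum>z\<in>Z. stopped_drift_sup z N \<omega> y) \<le> ennreal (of_int (N - y))"
proof -
  have "(\<Sum>z\<in>Z. stopped_drift_sup z N \<omega> y) = (SUP n. \<Sum>z\<in>Z. ennreal (stopped_drift z N n \<omega> y))"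
    unfolding stopped_drift_sup_def using incseq_stopped_drift[OF assms(2)] by (rule ennreal_SUP_sum[symmetric])
  also have "\<dots> \<le> ennreal (of_int (N - y))"
  proof (rule SUP_least)
    fix n
    have "(\<Sum>z\<in>Z. stopped_drift z N n \<omega> y) \<le> stopped_total_drift N n \<omega> y"
      using assms(1,2) by (rule sum_stopped_drift_le_total)
    also have "\<dots> \<le> of_int (N - y)"
      using assms(2,3) by (rule stopped_total_drift_le)
    finally show "(\<Sum>z\<in>Z. ennreal (stopped_drift z N n \<omega> y)) \<le> ennreal (of_int (N - y))"
      using assms(2) by (subst sum_ennreal) (simp_all add: stopped_drift_nonneg ennreal_leI)
  qed
  finally show ?thesis .
qed

text \<open>Shifting the environment by k moves x to x + k, and the drifts eaten at the sites x + k with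
  k < M add up to at most the total drift eaten before hitting N + M.\<close>

lemma sum_shifted_reset_left_le:
  assumes "cookie_env \<omega>" "0 \<le> x" "0 \<le> N"
  shows "(\<Sum>k<M. stopped_drift_sup x N (reset_left (shift_env (int k) \<omega>)) 0) \<le> ennreal (of_int N + real M)"
proof -
  have "stopped_drift_sup x N (reset_left (shift_env (int k) \<omega>)) 0
      \<le> stopped_drift_sup (x + int k) (N + int M) \<omega> 0" if "k < M" for k
  proof -
    have "stopped_drift_sup x N (reset_left (shift_env (int k) \<omega>)) 0
        \<le> stopped_drift_sup x N (shift_env (int k) \<omega>) (- int k)"
      using assms by (intro stopped_drift_sup_reset_left_le cookie_env_shift_env)
    also have "\<dots> = stopped_drift_sup (x + int k) (N + int k) \<omega> 0"
      by (simp add: stopped_drift_sup_def stopped_drift_shift)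
    also have "\<dots> \<le> stopped_drift_sup (x + int k) (N + int M) \<omega> 0"
      unfolding stopped_drift_sup_def using assms that
      by (intro SUP_mono' ennreal_leI stopped_drift_mono_target) auto
    finally show ?thesis .
  qed
  then have "(\<Sum>k<M. stopped_drift_sup x N (reset_left (shift_env (int k) \<omega>)) 0)
      \<le> (\<Sum>k<M. stopped_drift_sup (x + int k) (N + int M) \<omega> 0)"
    by (intro sum_mono) simp
  also have "\<dots> = (\<Sum>z\<in>(\<lambda>k. x + int k) ` {..<M}. stopped_drift_sup z (N + int M) \<omega> 0)"
    by (simp add: sum.reindex inj_on_def)
  also have "\<dots> \<le> ennreal (of_int N + real M)"
    using sum_stopped_drift_sup_le[of _ \<omega> 0 "N + int M"] assms by simp
  finally show ?thesis .
qed

section \<open>The quenched expectation\<close>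

abbreviation unif01 :: "real measure" where
  "unif01 \<equiv> uniform_measure lborel {0..1::real}"

lemma prob_space_unif01: "prob_space unif01"
  by (rule prob_space_uniform_measure) auto

lemma prob_space_unif_seq: "prob_space unif_seq"
  unfolding unif_seq_def using prob_space_unif01 by (rule prob_space_PiM)

lemma unif_seq_case_nat: "distr (unif01 \<Otimes>\<^sub>M unif_seq) unif_seq (\<lambda>(s, u). case_nat s u) = unif_seq"
proof -
  interpret sequence_space unif01
    unfolding sequence_space_def product_prob_space_def product_sigma_finite_def
      product_prob_space_axioms_def
    using prob_space_unif01 by (auto simp: prob_space_imp_sigma_finite)
  show ?thesis
    unfolding unif_seq_def by (rule PiM_iter)
qed

lemma nn_integral_unif_seq_case_nat:
  assumes "f \<in> borel_measurable unif_seq"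
  shows "(\<integral>\<^sup>+u. f u \<partial>unif_seq) = (\<integral>\<^sup>+s. \<integral>\<^sup>+v. f (case_nat s v) \<partial>unif_seq \<partial>unif01)"
proof -
  have sigma_finite: "sigma_finite_measure unif_seq"
    using prob_space_unif_seq by (rule prob_space_imp_sigma_finite)
  have case_nat: "(\<lambda>(s, u). case_nat s u) \<in> measurable (unif01 \<Otimes>\<^sub>M unif_seq) unif_seq"
    unfolding unif_seq_def by measurable
  have "(\<integral>\<^sup>+u. f u \<partial>unif_seq)
      = (\<integral>\<^sup>+u. f u \<partial>distr (unif01 \<Otimes>\<^sub>M unif_seq) unif_seq (\<lambda>(s, u). case_nat s u))"
    by (simp add: unif_seq_case_nat)
  also have "\<dots> = (\<integral>\<^sup>+z. f (case_prod case_nat z) \<partial>(unif01 \<Otimes>\<^sub>M unif_seq))"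
    by (rule nn_integral_distr[OF case_nat]) (simp add: assms)
  also have "\<dots> = (\<integral>\<^sup>+s. \<integral>\<^sup>+v. f (case_nat s v) \<partial>unif_seq \<partial>unif01)"
    using sigma_finite_measure.nn_integral_fst[OF sigma_finite, of "\<lambda>z. f (case_prod case_nat z)" unif01]
      measurable_compose[OF case_nat assms] by simp
  finally show ?thesis .
qed

lemma nn_integral_jump:
  assumes "cookie_env \<omega>"
  shows "(\<integral>\<^sup>+s. f (jump \<omega> y s) \<partial>unif01) = ennreal (\<omega> y 0) * f (y + 1) + ennreal (1 - \<omega> y 0) * f (y - 1)"
proof -
  note p = cookie_env_bounds[OF assms, of y]
  have "(\<lambda>s. f (jump \<omega> y s)) = (\<lambda>s. f (y + 1) * indicator {..<\<omega> y 0} s + f (y - 1) * indicator {\<omega> y 0..} s)"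
    by (auto simp: jump_def indicator_def fun_eq_iff)
  moreover have "{0..1} \<inter> {..<\<omega> y 0} = {0..<\<omega> y 0}" "{0..1} \<inter> {\<omega> y 0..} = {\<omega> y 0..1}"
    using p by auto
  then have "emeasure unif01 {..<\<omega> y 0} = ennreal (\<omega> y 0)"
    "emeasure unif01 {\<omega> y 0..} = ennreal (1 - \<omega> y 0)"
    using p by (simp_all add: emeasure_uniform_measure divide_ennreal_def)
  ultimately show ?thesis
    by (simp add: nn_integral_add nn_integral_cmult_indicator mult.commute)
qed

lemma measurable_first_step:
  assumes "\<And>z. F z \<in> borel_measurable unif_seq"
  shows "(\<lambda>u. F (jump \<omega> y (u 0)) (u \<circ> Suc)) \<in> borel_measurable unif_seq"
proof -
  have tail: "(\<lambda>u. u \<circ> Suc) \<in> measurable unif_seq unif_seq"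
    unfolding unif_seq_def by (rule measurable_PiM_single') (auto simp: space_PiM)
  have "(\<lambda>u. u 0) \<in> borel_measurable unif_seq"
    unfolding unif_seq_def by (rule measurable_compose[OF measurable_component_singleton, of 0 UNIV]) auto
  then have "{u \<in> space unif_seq. u 0 < \<omega> y 0} \<in> sets unif_seq"
    by (rule borel_measurable_less[OF _ measurable_const]) simp
  moreover have "(\<lambda>u. F (jump \<omega> y (u 0)) (u \<circ> Suc))
      = (\<lambda>u. if u 0 < \<omega> y 0 then F (y + 1) (u \<circ> Suc) else F (y - 1) (u \<circ> Suc))"
    by (simp add: jump_def fun_eq_iff)
  ultimately show ?thesis
    by (auto intro!: measurable_If measurable_compose[OF tail assms])
qed

lemma measurable_drift_n_walk: "(\<lambda>u. drift_n \<omega> (walk \<omega> y u) x n) \<in> borel_measurable unif_seq"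
proof (induction n arbitrary: \<omega> y)
  case 0
  then show ?case by (simp add: drift_n_def)
next
  case (Suc n)
  show ?case
    unfolding walk_Suc_first[of \<omega> y] drift_n_Suc_first
    by (intro borel_measurable_add borel_measurable_const measurable_first_step Suc.IH)
qed

lemma measurable_ennreal_drift_n_walk:
  "(\<lambda>u. ennreal (drift_n \<omega> (walk \<omega> y u) x n)) \<in> borel_measurable unif_seq"
  by (rule measurable_compose[OF measurable_drift_n_walk measurable_ennreal])

lemma nn_integral_drift_n_walk:
  "cookie_env \<omega> \<Longrightarrow>
    (\<integral>\<^sup>+u. ennreal (drift_n \<omega> (walk \<omega> y u) x n) \<partial>unif_seq) = ennreal (expected_drift x n \<omega> y)"
proof (induction n arbitrary: \<omega> y)
  case 0
  then show ?case by (simp add: drift_n_def)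
next
  case (Suc n)
  define \<omega>\<^sub>1 where "\<omega>\<^sub>1 = eat_cookie y \<omega>"
  have env: "cookie_env \<omega>\<^sub>1"
    using Suc.prems by (simp add: \<omega>\<^sub>1_def cookie_env_eat_cookie)
  define a where "a z = drift_at x \<omega> y + expected_drift x n \<omega>\<^sub>1 z" for z
  have a_nonneg: "0 \<le> a z" for z
    using drift_at_bounds[OF Suc.prems] expected_drift_nonneg[OF env] by (simp add: a_def)
  have drift_step: "drift_n \<omega> (walk \<omega> y (case_nat s v)) x (Suc n)
      = drift_at x \<omega> y + drift_n \<omega>\<^sub>1 (walk \<omega>\<^sub>1 (jump \<omega> y s) v) x n" for s v
  proof -
    have "case_nat s v \<circ> Suc = v" by (simp add: fun_eq_iff)
    then show ?thesis
      by (simp add: walk_Suc_first[of \<omega> y] drift_n_Suc_first \<omega>\<^sub>1_def)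
  qed
  have "(\<integral>\<^sup>+u. ennreal (drift_n \<omega> (walk \<omega> y u) x (Suc n)) \<partial>unif_seq)
      = (\<integral>\<^sup>+s. \<integral>\<^sup>+v. ennreal (drift_at x \<omega> y)
          + ennreal (drift_n \<omega>\<^sub>1 (walk \<omega>\<^sub>1 (jump \<omega> y s) v) x n) \<partial>unif_seq \<partial>unif01)"
    using Suc.prems env
    by (simp add: nn_integral_unif_seq_case_nat measurable_ennreal_drift_n_walk drift_step
        drift_at_bounds drift_n_nonneg)
  also have "\<dots> = (\<integral>\<^sup>+s. ennreal (drift_at x \<omega> y) + ennreal (expected_drift x n \<omega>\<^sub>1 (jump \<omega> y s)) \<partial>unif01)"
    using env prob_space.emeasure_space_1[OF prob_space_unif_seq]
    by (simp add: nn_integral_add measurable_ennreal_drift_n_walk Suc.IH)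
  also have "\<dots> = (\<integral>\<^sup>+s. ennreal (a (jump \<omega> y s)) \<partial>unif01)"
    using a_nonneg by (simp add: a_def drift_at_bounds[OF Suc.prems] expected_drift_nonneg[OF env])
  also have "\<dots> = ennreal (\<omega> y 0) * ennreal (a (y + 1)) + ennreal (1 - \<omega> y 0) * ennreal (a (y - 1))"
    using Suc.prems by (rule nn_integral_jump)
  also have "\<dots> = ennreal (\<omega> y 0 * a (y + 1) + (1 - \<omega> y 0) * a (y - 1))"
    using a_nonneg cookie_env_bounds[OF Suc.prems, of y] by (intro ennreal_convex_combination[symmetric]) simp_all
  also have "\<dots> = ennreal (expected_drift x (Suc n) \<omega> y)"
    by (simp add: expected_drift_Suc a_def \<omega>\<^sub>1_def algebra_simps)
  finally show ?case .
qed

lemma quenched_E_drift_eq_SUP: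
  assumes "cookie_env \<omega>"
  shows "quenched_E_drift \<omega> y x = (SUP n. ennreal (expected_drift x n \<omega> y))"
proof -
  have "quenched_E_drift \<omega> y x = (SUP n. \<integral>\<^sup>+u. ennreal (drift_n \<omega> (walk \<omega> y u) x n) \<partial>unif_seq)"
    unfolding quenched_E_drift_def drift_inf_def
  proof (rule nn_integral_monotone_convergence_SUP)
    show "incseq (\<lambda>n u. ennreal (drift_n \<omega> (walk \<omega> y u) x n))"
      using assms by (auto simp: incseq_def le_fun_def intro!: ennreal_leI drift_n_mono)
  qed (rule measurable_ennreal_drift_n_walk)
  then show ?thesis
    using assms by (simp add: nn_integral_drift_n_walk)
qed

abbreviation env_borel :: "env measure" where
  "env_borel \<equiv> PiM UNIV (\<lambda>_::int. PiM UNIV (\<lambda>_::nat. borel :: real measure))"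

lemma measurable_cookie_strengths:
  "(\<lambda>v. v) \<in> measurable (PiM UNIV (\<lambda>_::nat. restrict_space borel {1/2..1::real})) (PiM UNIV (\<lambda>_. borel))"
proof (rule measurable_PiM_single')
  show "(\<lambda>v. v i) \<in> borel_measurable (PiM UNIV (\<lambda>_::nat. restrict_space borel {1/2..1::real}))" for i
    by (rule measurable_compose[OF measurable_component_singleton[of i UNIV] measurable_restrict_space1]) simp_all
qed (simp add: space_PiM)

lemma measurable_component_cookie_strengths:
  assumes "z \<in> I"
  shows "(\<lambda>\<omega>. \<omega> z) \<in> measurable (PiM I (\<lambda>_. PiM UNIV (\<lambda>_::nat. restrict_space borel {1/2..1::real})))
    (PiM UNIV (\<lambda>_. borel))"
proof -
  have "(\<lambda>\<omega>. \<omega> z) \<in> measurable (PiM I (\<lambda>_. PiM UNIV (\<lambda>_::nat. restrict_space borel {1/2..1::real})))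
      (PiM UNIV (\<lambda>_::nat. restrict_space borel {1/2..1::real}))"
    using assms by (rule measurable_component_singleton)
  from measurable_compose[OF this measurable_cookie_strengths] show ?thesis by simp
qed

lemma measurable_cookie: "(\<lambda>\<omega>. \<omega> z i) \<in> borel_measurable env_borel"
  by (rule measurable_compose[OF measurable_component_singleton[of z UNIV]
        measurable_component_singleton[of i UNIV]]) simp_all

lemma measurable_eat_cookie: "eat_cookie y \<in> measurable env_borel env_borel"
proof -
  have "(\<lambda>\<omega>. eat_cookie y \<omega> z) \<in> measurable env_borel (PiM UNIV (\<lambda>_::nat. borel))" for z
  proof (cases "z = y")
    case True
    have "(\<lambda>\<omega> i. \<omega> y (Suc i)) \<in> measurable env_borel (PiM UNIV (\<lambda>_::nat. borel))"
      by (rule measurable_PiM_single') (simp_all add: measurable_cookie space_PiM)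
    then show ?thesis using True by (simp add: eat_cookie_def)
  qed (simp add: eat_cookie_def)
  then have "(\<lambda>\<omega> z. eat_cookie y \<omega> z) \<in> measurable env_borel env_borel"
    by (rule measurable_PiM_single') (simp add: space_PiM)
  then show ?thesis by simp
qed

lemma measurable_stopped_value:
  assumes "\<And>y. (\<lambda>\<omega>. r \<omega> y) \<in> borel_measurable env_borel"
  shows "(\<lambda>\<omega>. stopped_value st g r n \<omega> y) \<in> borel_measurable env_borel"
proof (induction n arbitrary: y)
  case (Suc n)
  have "(\<lambda>\<omega>. stopped_value st g r n (eat_cookie y \<omega>) (y + 1)) \<in> borel_measurable env_borel"
    "(\<lambda>\<omega>. stopped_value st g r n (eat_cookie y \<omega>) (y - 1)) \<in> borel_measurable env_borel"
    using measurable_compose[OF measurable_eat_cookie Suc.IH] by simp_all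
  then show ?case
    using assms[of y] measurable_cookie[of y 0] by simp
qed simp

lemma measurable_env_borel:
  assumes "sets M = sets Omega_plus"
  shows "(\<lambda>\<omega>. \<omega>) \<in> measurable M env_borel"
proof -
  have "(\<lambda>\<omega>. \<omega>) \<in> measurable Omega_plus env_borel"
    unfolding Omega_plus_def
    by (rule measurable_PiM_single') (simp_all add: space_PiM measurable_component_cookie_strengths)
  then show ?thesis
    using measurable_cong_sets[OF assms refl, of env_borel] by simp
qed

lemma measurable_reset_left: "reset_left \<in> measurable Omega_plus_nonneg env_borel"
proof -
  have "(\<lambda>r. reset_left r z) \<in> measurable Omega_plus_nonneg (PiM UNIV (\<lambda>_::nat. borel))" for z
    unfolding Omega_plus_nonneg_def reset_left_def
    by (cases "0 \<le> z") (simp_all add: measurable_component_cookie_strengths space_PiM)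
  then have "(\<lambda>r z. reset_left r z) \<in> measurable Omega_plus_nonneg env_borel"
    by (rule measurable_PiM_single') (simp add: space_PiM)
  then show ?thesis by simp
qed

lemma measurable_env_shift_restr:
  assumes "sets M = sets Omega_plus"
  shows "env_shift_restr k \<in> measurable M Omega_plus_nonneg"
proof -
  have "(\<lambda>\<omega>. \<lambda>z\<in>{0::int..}. \<omega> (z + int k)) \<in> measurable Omega_plus Omega_plus_nonneg"
    unfolding Omega_plus_nonneg_def Omega_plus_def
    by (intro measurable_restrict measurable_component_singleton) simp
  then show ?thesis
    using measurable_cong_sets[OF assms refl, of Omega_plus_nonneg] by (simp add: env_shift_restr_def[abs_def])
qed

lemma cookie_env_space:
  assumes "sets M = sets Omega_plus" "\<omega> \<in> space M"
  shows "cookie_env \<omega>"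
  using assms sets_eq_imp_space_eq[OF assms(1)]
  by (auto simp: Omega_plus_def space_PiM cookie_env_def PiE_iff)

lemma measurable_stopped_drift: "(\<lambda>\<omega>. stopped_drift x N n \<omega> y) \<in> borel_measurable env_borel"
  and measurable_expected_drift: "(\<lambda>\<omega>. expected_drift x n \<omega> y) \<in> borel_measurable env_borel"
  unfolding stopped_drift_def expected_drift_def drift_at_def
  using measurable_cookie by (intro measurable_stopped_value; simp)+

lemma measurable_stopped_drift_sup_reset_left:
  "(\<lambda>r. stopped_drift_sup x N (reset_left r) y) \<in> borel_measurable Omega_plus_nonneg"
proof -
  have "(\<lambda>r. ennreal (stopped_drift x N n (reset_left r) y)) \<in> borel_measurable Omega_plus_nonneg" for n
    by (intro measurable_compose[OF measurable_compose[OF measurable_reset_left measurable_stopped_drift]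
          measurable_ennreal])
  then show ?thesis
    unfolding stopped_drift_sup_def by measurable
qed

text \<open>By stationarity all M shifts have the same integral, which is thus at most (C + M) / M.\<close>

lemma stationary_average_le_1:
  assumes P: "prob_space P" "sets P = sets Omega_plus" "stationary_nonneg P"
    and f: "f \<in> borel_measurable Omega_plus_nonneg" and "0 \<le> C"
    and bound: "\<And>M \<omega>. \<omega> \<in> space P \<Longrightarrow> (\<Sum>k<M. f (env_shift_restr k \<omega>)) \<le> ennreal (C + real M)"
  shows "(\<integral>\<^sup>+\<omega>. f (env_shift_restr 0 \<omega>) \<partial>P) \<le> 1"
proof (rule ennreal_le_1_of_linear_bound[OF \<open>0 \<le> C\<close>])
  fix M :: nat
  have shift: "env_shift_restr k \<in> measurable P Omega_plus_nonneg" for k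
    using P(2) by (rule measurable_env_shift_restr)
  have same: "(\<integral>\<^sup>+\<omega>. f (env_shift_restr k \<omega>) \<partial>P) = (\<integral>\<^sup>+\<omega>. f (env_shift_restr 0 \<omega>) \<partial>P)" for k
  proof -
    have "(\<integral>\<^sup>+\<omega>. f (env_shift_restr k \<omega>) \<partial>P) = (\<integral>\<^sup>+r. f r \<partial>distr P Omega_plus_nonneg (env_shift_restr k))"
      using shift f by (simp add: nn_integral_distr)
    also have "\<dots> = (\<integral>\<^sup>+r. f r \<partial>distr P Omega_plus_nonneg (env_shift_restr 0))"
      using P(3) unfolding stationary_nonneg_def by metis
    also have "\<dots> = (\<integral>\<^sup>+\<omega>. f (env_shift_restr 0 \<omega>) \<partial>P)"
      using shift f by (simp add: nn_integral_distr)
    finally show ?thesis .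
  qed
  have "(\<Sum>k<M. \<integral>\<^sup>+\<omega>. f (env_shift_restr k \<omega>) \<partial>P) = (\<Sum>k<M. \<integral>\<^sup>+\<omega>. f (env_shift_restr 0 \<omega>) \<partial>P)"
    by (intro sum.cong refl same)
  then have "of_nat M * (\<integral>\<^sup>+\<omega>. f (env_shift_restr 0 \<omega>) \<partial>P) = (\<Sum>k<M. \<integral>\<^sup>+\<omega>. f (env_shift_restr k \<omega>) \<partial>P)"
    by simp
  also have "\<dots> = (\<integral>\<^sup>+\<omega>. (\<Sum>k<M. f (env_shift_restr k \<omega>)) \<partial>P)"
    using measurable_compose[OF shift f] by (intro nn_integral_sum[symmetric]) simp
  also have "\<dots> \<le> (\<integral>\<^sup>+\<omega>. ennreal (C + real M) \<partial>P)"
    using bound by (intro nn_integral_mono) simp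
  also have "\<dots> = ennreal (C + real M)"
    using prob_space.emeasure_space_1[OF P(1)] by simp
  finally show "of_nat M * (\<integral>\<^sup>+\<omega>. f (env_shift_restr 0 \<omega>) \<partial>P) \<le> ennreal (C + real M)" .
qed

lemma integral_expected_drift_le_1:
  assumes P: "prob_space P" "sets P = sets Omega_plus" "stationary_nonneg P" and "0 \<le> x"
  shows "(\<integral>\<^sup>+\<omega>. ennreal (expected_drift x n \<omega> 0) \<partial>P) \<le> 1"
proof -
  define N where "N = x + int n"
  have "0 \<le> N" using \<open>0 \<le> x\<close> by (simp add: N_def)
  have "(\<integral>\<^sup>+\<omega>. ennreal (expected_drift x n \<omega> 0) \<partial>P)
      \<le> (\<integral>\<^sup>+\<omega>. stopped_drift_sup x N (reset_left (env_shift_restr 0 \<omega>)) 0 \<partial>P)"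
  proof (rule nn_integral_mono)
    fix \<omega> assume "\<omega> \<in> space P"
    then have "cookie_env \<omega>" using P(2) cookie_env_space by blast
    have "expected_drift x n \<omega> 0 = stopped_drift x N n \<omega> 0"
      using \<open>0 \<le> x\<close> by (intro expected_drift_eq_stopped_drift) (simp add: N_def)
    then show "ennreal (expected_drift x n \<omega> 0) \<le> stopped_drift_sup x N (reset_left (env_shift_restr 0 \<omega>)) 0"
      using stopped_drift_le_sup_reset_left[OF \<open>0 \<le> x\<close> \<open>0 \<le> N\<close> \<open>cookie_env \<omega>\<close>, of n 0]
      by (simp add: reset_left_env_shift_restr shift_env_def)
  qed
  also have "\<dots> \<le> 1"
  proof (rule stationary_average_le_1[OF P measurable_stopped_drift_sup_reset_left])
    show "0 \<le> real_of_int N"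
      using \<open>0 \<le> N\<close> by simp
    show "(\<Sum>k<M. stopped_drift_sup x N (reset_left (env_shift_restr k \<omega>)) 0) \<le> ennreal (of_int N + real M)"
      if "\<omega> \<in> space P" for M \<omega>
      using sum_shifted_reset_left_le[OF cookie_env_space[OF P(2) that] \<open>0 \<le> x\<close> \<open>0 \<le> N\<close>]
      by (simp add: reset_left_env_shift_restr)
  qed
  finally show ?thesis .
qed

theorem mainTheorem11:
  fixes P :: "env measure" and x :: int
  assumes "prob_space P"
    and "sets P = sets Omega_plus"
    and "stationary_nonneg P"
    and "x \<ge> 0"
  shows "annealed_E_drift P 0 x \<le> 1"
proof -
  have env: "\<omega> \<in> space P \<Longrightarrow> cookie_env \<omega>" for \<omega>
    using assms(2) by (rule cookie_env_space)
  have "annealed_E_drift P 0 x = (\<integral>\<^sup>+\<omega>. (SUP n. ennreal (expected_drift x n \<omega> 0)) \<partial>P)"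
    unfolding annealed_E_drift_def by (rule nn_integral_cong) (simp add: quenched_E_drift_eq_SUP env)
  also have "\<dots> = (SUP n. \<integral>\<^sup>+\<omega>. ennreal (expected_drift x n \<omega> 0) \<partial>P)"
  proof (rule nn_integral_monotone_convergence_SUP_AE)
    show "AE \<omega> in P. ennreal (expected_drift x n \<omega> 0) \<le> ennreal (expected_drift x (Suc n) \<omega> 0)" for n
      using env by (intro AE_I2 ennreal_leI expected_drift_mono) auto
    show "(\<lambda>\<omega>. ennreal (expected_drift x n \<omega> 0)) \<in> borel_measurable P" for n
      by (intro measurable_compose[OF measurable_compose[OF measurable_env_borel[OF assms(2)]
            measurable_expected_drift] measurable_ennreal])
  qed
  also have "\<dots> \<le> 1"
    using integral_expected_drift_le_1[OF assms] by (rule SUP_least)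
  finally show ?thesis .
qed

end
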